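(* Fix $I_{ij},I_{jk},I_{ki}\in[0,\infty)$. Define $\rho_E:\mathbb{R}^3_{>0}\to\mathbb{R}^3_{>0}$ by $$\rho_E(r_i,r_j,r_k)=(l_{ij},l_{jk},l_{ki}),$$ where $$l_{ij}=\sqrt{r_i^2+r_j^2+2I_{ij}r_ir_j},\quad l_{jk}=\sqrt{r_j^2+r_k^2+2I_{jk}r_jr_k},\quad l_{ki}=\sqrt{r_k^2+r_i^2+2I_{ki}r_kr_i}.$$ Then $\rho_E$ is a smooth embedding. In particular, for any given positive $l_{ij},l_{jk},l_{ki}$ there is at most one $(r_i,r_j,r_k)\in\mathbb{R}^3_{>0}$ with $\rho_E(r_i,r_j,r_k)=(l_{ij},l_{jk},l_{ki})$. *)

theory Defs
  imports "HOL-Analysis.Analysis"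
begin

fun Ck_on :: "nat \<Rightarrow> 'a::euclidean_space set \<Rightarrow> ('a \<Rightarrow> 'b::real_normed_vector) \<Rightarrow> bool" where
  "Ck_on 0 S f = continuous_on S f"
| "Ck_on (Suc k) S f =
     (\<exists>D. (\<forall>x\<in>S. (f has_derivative D x) (at x)) \<and> (\<forall>i\<in>Basis. Ck_on k S (\<lambda>x. D x i)))"

definition smooth_on :: "'a::euclidean_space set \<Rightarrow> ('a \<Rightarrow> 'b::real_normed_vector) \<Rightarrow> bool" where
  "smooth_on S f \<longleftrightarrow> (\<forall>k. Ck_on k S f)"

definition smooth_embedding :: "'a::euclidean_space set \<Rightarrow> ('a \<Rightarrow> 'b::euclidean_space) \<Rightarrow> bool" where
  "smooth_embedding S f \<longleftrightarrow>
     smooth_on S f \<and>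
     (\<forall>x\<in>S. \<exists>D. (f has_derivative D) (at x) \<and> inj D) \<and>
     (\<exists>g. homeomorphism S (f ` S) f g)"

definition pos_octant :: "(real^3) set" where
  "pos_octant = {r. \<forall>i. 0 < r $ i}"

definition edge_len :: "real \<Rightarrow> real \<Rightarrow> real \<Rightarrow> real" where
  "edge_len I a b = sqrt (a\<^sup>2 + b\<^sup>2 + 2 * I * a * b)"

text \<open>rho_E(r_i,r_j,r_k) = (l_ij, l_jk, l_ki); coordinates 1,2,3 stand for i,j,k.\<close>
definition rhoE :: "real \<Rightarrow> real \<Rightarrow> real \<Rightarrow> real^3 \<Rightarrow> real^3" where
  "rhoE Iij Ijk Iki r =
     vector [edge_len Iij (r$1) (r$2), edge_len Ijk (r$2) (r$3), edge_len Iki (r$3) (r$1)]"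

end

theory Submission
  imports Defs
begin

(* Smoothness: every component of rhoE is built from constants and coordinates by sums,
   products and square roots of functions that stay positive on the octant.  We introduce
   the class radical_fun of such functions, show that it is closed under taking partial
   derivatives (inverses are needed for the derivative of sqrt), and conclude that its
   members are C^k for every k; a vector map with such components is then smooth.

   Immersion: the differential of rhoE is a cyclic linear system whose coefficients are all
   positive; its determinant a1 a2 a3 + b1 b2 b3 is positive, so the kernel is trivial.

   Injectivity: each edge length is strictly increasing in both radii, so equal edge lengths
   force a larger first radius to come with a smaller second one; going once around the
   triangle gives a contradiction unless r = s.  Invariance of domain then turns the
   continuous injection on the open octant into a homeomorphism onto its image. *)

lemma has_derivative_vec_nth [derivative_intros]:
  "((\<lambda>x::real^'n. x $ i) has_derivative (\<lambda>h. h $ i)) F"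
  by (rule bounded_linear_imp_has_derivative) (rule bounded_linear_vec_nth)


subsection \<open>Smoothness\<close>

inductive radical_fun :: "(real^'n) set \<Rightarrow> (real^'n \<Rightarrow> real) \<Rightarrow> bool" for S where
  const: "radical_fun S (\<lambda>x. c)"
| coord: "radical_fun S (\<lambda>x. x $ i)"
| add: "radical_fun S f \<Longrightarrow> radical_fun S g \<Longrightarrow> radical_fun S (\<lambda>x. f x + g x)"
| mult: "radical_fun S f \<Longrightarrow> radical_fun S g \<Longrightarrow> radical_fun S (\<lambda>x. f x * g x)"
| inverse: "radical_fun S f \<Longrightarrow> (\<forall>x\<in>S. 0 < f x) \<Longrightarrow> radical_fun S (\<lambda>x. inverse (f x))"
| sqrt: "radical_fun S f \<Longrightarrow> (\<forall>x\<in>S. 0 < f x) \<Longrightarrow> radical_fun S (\<lambda>x. sqrt (f x))"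

lemma radical_fun_has_partials:
  assumes "radical_fun S f"
  shows "\<exists>D. (\<forall>x\<in>S. (f has_derivative D x) (at x)) \<and> (\<forall>h. radical_fun S (\<lambda>x. D x h))"
  using assms
proof induction
  case (const c)
  show ?case
    by (rule exI[of _ "\<lambda>x h. 0"]) (auto intro: radical_fun.const)
next
  case (coord i)
  show ?case
    by (rule exI[of _ "\<lambda>x h. h $ i"]) (auto intro: radical_fun.const has_derivative_vec_nth)
next
  case (add f g)
  then obtain Df Dg
    where "\<forall>x\<in>S. (f has_derivative Df x) (at x)" "\<forall>h. radical_fun S (\<lambda>x. Df x h)"
      and "\<forall>x\<in>S. (g has_derivative Dg x) (at x)" "\<forall>h. radical_fun S (\<lambda>x. Dg x h)"
    by blast
  then show ?case
    by (intro exI[of _ "\<lambda>x h. Df x h + Dg x h"])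
      (auto intro!: has_derivative_add radical_fun.add)
next
  case (mult f g)
  then obtain Df Dg
    where "\<forall>x\<in>S. (f has_derivative Df x) (at x)" "\<forall>h. radical_fun S (\<lambda>x. Df x h)"
      and "\<forall>x\<in>S. (g has_derivative Dg x) (at x)" "\<forall>h. radical_fun S (\<lambda>x. Dg x h)"
    by blast
  with mult.hyps show ?case
    by (intro exI[of _ "\<lambda>x h. f x * Dg x h + Df x h * g x"])
      (auto intro!: has_derivative_mult radical_fun.add radical_fun.mult)
next
  case (inverse f)
  then obtain Df
    where Df: "\<forall>x\<in>S. (f has_derivative Df x) (at x)" "\<forall>h. radical_fun S (\<lambda>x. Df x h)"
    by blast
  have inv: "radical_fun S (\<lambda>x. inverse (f x))"
    using inverse.hyps by (rule radical_fun.inverse)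
  have "radical_fun S (\<lambda>x. - 1 * (inverse (f x) * Df x h * inverse (f x)))" for h
    using Df(2) inv by (intro radical_fun.mult radical_fun.const) auto
  moreover have "((\<lambda>x. inverse (f x)) has_derivative
      (\<lambda>h. - (inverse (f x) * Df x h * inverse (f x)))) (at x)" if "x \<in> S" for x
    using Df(1) inverse.hyps that by (intro Deriv.has_derivative_inverse) auto
  ultimately show ?case
    by (intro exI[of _ "\<lambda>x h. - (inverse (f x) * Df x h * inverse (f x))"]) auto
next
  case (sqrt f)
  then obtain Df
    where Df: "\<forall>x\<in>S. (f has_derivative Df x) (at x)" "\<forall>h. radical_fun S (\<lambda>x. Df x h)"
    by blast
  have root_pos: "\<forall>x\<in>S. 0 < sqrt (f x)"
    using sqrt.hyps by auto
  \<comment> \<open>the derivative of sqrt f is Df / (2 sqrt f), radical since sqrt f is positive\<close>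
  have "radical_fun S (\<lambda>x. Df x h * (inverse (sqrt (f x)) * (1/2)))" for h
    using Df(2) sqrt.hyps root_pos
    by (intro radical_fun.mult radical_fun.const radical_fun.inverse radical_fun.sqrt) auto
  moreover have "((\<lambda>x. sqrt (f x)) has_derivative
      (\<lambda>h. Df x h * (inverse (sqrt (f x)) / 2))) (at x)" if "x \<in> S" for x
    using Df(1) sqrt.hyps that by (intro has_derivative_real_sqrt) auto
  ultimately show ?case
    by (intro exI[of _ "\<lambda>x h. Df x h * (inverse (sqrt (f x)) / 2)"]) auto
qed

lemma radical_fun_Ck_on: "radical_fun S f \<Longrightarrow> Ck_on k S f"
proof (induction k arbitrary: f)
  case 0
  then obtain D where "\<forall>x\<in>S. (f has_derivative D x) (at x)"
    using radical_fun_has_partials by blast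
  then show ?case
    by (auto intro!: continuous_at_imp_continuous_on dest: has_derivative_continuous)
next
  case (Suc k)
  then obtain D where "\<forall>x\<in>S. (f has_derivative D x) (at x)" "\<forall>h. radical_fun S (\<lambda>x. D x h)"
    using radical_fun_has_partials by blast
  with Suc.IH show ?case by auto
qed

lemma has_derivative_vec_componentwise:
  fixes f :: "'a::real_normed_vector \<Rightarrow> real^'n"
  assumes "\<And>j. ((\<lambda>x. f x $ j) has_derivative D j) (at x)"
  shows "(f has_derivative (\<lambda>h. \<chi> j. D j h)) (at x)"
proof (rule iffD2[OF has_derivative_componentwise_within], rule ballI)
  fix i :: "real^'n"
  assume "i \<in> Basis"
  then obtain j where i: "i = axis j 1"
    by (auto simp: Basis_vec_def)
  show "((\<lambda>x. f x \<bullet> i) has_derivative (\<lambda>h. (\<chi> j. D j h) \<bullet> i)) (at x)"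
    using assms[of j] by (simp add: i inner_axis)
qed

lemma Ck_on_componentwise:
  fixes f :: "real^'m \<Rightarrow> real^'n"
  assumes "\<And>j. Ck_on k S (\<lambda>x. f x $ j)"
  shows "Ck_on k S f"
  using assms
proof (induction k arbitrary: f)
  case 0
  then have "continuous_on S (\<lambda>x. \<chi> j. f x $ j)"
    by (intro continuous_on_vec_lambda) simp
  then show ?case by simp
next
  case (Suc k)
  then obtain D
    where D: "\<And>j. \<forall>x\<in>S. ((\<lambda>x. f x $ j) has_derivative D j x) (at x)"
      and D_Ck: "\<And>j i. i \<in> Basis \<Longrightarrow> Ck_on k S (\<lambda>x. D j x i)"
    by (simp only: Ck_on.simps) metis
  have "\<forall>x\<in>S. (f has_derivative (\<lambda>h. \<chi> j. D j x h)) (at x)"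
    using D by (auto intro!: has_derivative_vec_componentwise)
  moreover have "Ck_on k S (\<lambda>x. \<chi> j. D j x i)" if "i \<in> Basis" for i
    using Suc.IH D_Ck that by simp
  ultimately show ?case by auto
qed

lemma edge_len_pos: "0 \<le> I \<Longrightarrow> 0 < a \<Longrightarrow> 0 < b \<Longrightarrow> 0 < edge_len I a b"
  unfolding edge_len_def by (auto intro!: add_pos_nonneg)

lemma radical_fun_edge_len:
  assumes "0 \<le> I"
  shows "radical_fun pos_octant (\<lambda>r. edge_len I (r $ a) (r $ b))"
proof -
  let ?rad = "\<lambda>r::real^3. r$a * r$a + r$b * r$b + 2 * I * (r$a * r$b)"
  have "radical_fun pos_octant ?rad"
    by (intro radical_fun.add radical_fun.mult radical_fun.coord radical_fun.const)
  moreover have "\<forall>r\<in>pos_octant. 0 < ?rad r"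
  proof
    fix r :: "real^3"
    assume "r \<in> pos_octant"
    then have "0 < r$a" "0 < r$b"
      by (auto simp: pos_octant_def)
    with assms show "0 < ?rad r"
      by (intro add_pos_nonneg add_pos_pos) auto
  qed
  ultimately have "radical_fun pos_octant (\<lambda>r. sqrt (?rad r))"
    by (rule radical_fun.sqrt)
  then show ?thesis
    by (simp add: edge_len_def power2_eq_square mult.assoc)
qed

lemma smooth_on_rhoE:
  assumes "0 \<le> Iij" and "0 \<le> Ijk" and "0 \<le> Iki"
  shows "smooth_on pos_octant (rhoE Iij Ijk Iki)"
proof -
  have "radical_fun pos_octant (\<lambda>r. rhoE Iij Ijk Iki r $ j)" for j
    using exhaust_3[of j] assms by (auto simp: rhoE_def intro!: radical_fun_edge_len)
  then show ?thesis
    unfolding smooth_on_def by (blast intro: Ck_on_componentwise radical_fun_Ck_on)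
qed


subsection \<open>The differential is injective\<close>

lemma edge_len_has_derivative:
  fixes r :: "real^'n"
  assumes "0 \<le> I" and "0 < r $ a" and "0 < r $ b"
  shows "((\<lambda>x. edge_len I (x $ a) (x $ b)) has_derivative
     (\<lambda>h. ((r$a + I * r$b) * h$a + (r$b + I * r$a) * h$b) / edge_len I (r$a) (r$b))) (at r)"
proof -
  have rad_pos: "0 < (r$a)\<^sup>2 + (r$b)\<^sup>2 + 2 * I * r$a * r$b"
    using assms by (auto intro!: add_pos_nonneg)
  show ?thesis
    unfolding edge_len_def
    by (rule derivative_eq_intros refl rad_pos | simp)+
      (use rad_pos in \<open>auto simp: fun_eq_iff field_simps power2_eq_square\<close>)
qed

definition rhoE_diff :: "real \<Rightarrow> real \<Rightarrow> real \<Rightarrow> real^3 \<Rightarrow> real^3 \<Rightarrow> real^3" where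
  "rhoE_diff Iij Ijk Iki r h = vector [
     ((r$1 + Iij*r$2) * h$1 + (r$2 + Iij*r$1) * h$2) / edge_len Iij (r$1) (r$2),
     ((r$2 + Ijk*r$3) * h$2 + (r$3 + Ijk*r$2) * h$3) / edge_len Ijk (r$2) (r$3),
     ((r$3 + Iki*r$1) * h$3 + (r$1 + Iki*r$3) * h$1) / edge_len Iki (r$3) (r$1)]"

lemma rhoE_has_derivative:
  assumes "0 \<le> Iij" and "0 \<le> Ijk" and "0 \<le> Iki" and "r \<in> pos_octant"
  shows "(rhoE Iij Ijk Iki has_derivative rhoE_diff Iij Ijk Iki r) (at r)"
proof -
  have "((\<lambda>x. rhoE Iij Ijk Iki x $ j) has_derivative (\<lambda>h. rhoE_diff Iij Ijk Iki r h $ j)) (at r)"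
    for j
    using exhaust_3[of j] assms
    by (auto simp: rhoE_def rhoE_diff_def pos_octant_def intro!: edge_len_has_derivative)
  then have "(rhoE Iij Ijk Iki has_derivative (\<lambda>h. \<chi> j. rhoE_diff Iij Ijk Iki r h $ j)) (at r)"
    by (rule has_derivative_vec_componentwise)
  then show ?thesis
    by simp
qed

text \<open>A cyclic homogeneous 3x3 system with positive coefficients has only the trivial
  solution: eliminating y and z leaves x times the positive determinant.\<close>
lemma cyclic_system_trivial:
  fixes a1 b1 a2 b2 a3 b3 x y z :: real
  assumes pos: "0 < a1" "0 < b1" "0 < a2" "0 < b2" "0 < a3" "0 < b3"
    and eqs: "a1 * x + b1 * y = 0" "a2 * y + b2 * z = 0" "a3 * z + b3 * x = 0"
  shows "x = 0 \<and> y = 0 \<and> z = 0"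
proof -
  have "x * (a1 * a2 * a3 + b1 * b2 * b3)
      = a2 * a3 * (a1 * x + b1 * y) - b1 * a3 * (a2 * y + b2 * z) + b1 * b2 * (a3 * z + b3 * x)"
    by (simp add: algebra_simps)
  also have "\<dots> = 0"
    using eqs by simp
  finally have "x * (a1 * a2 * a3 + b1 * b2 * b3) = 0" .
  moreover have "0 < a1 * a2 * a3 + b1 * b2 * b3"
    using pos by (intro add_pos_pos mult_pos_pos)
  ultimately have "x = 0" by simp
  then have "y = 0" using eqs(1) pos(2) by simp
  then have "z = 0" using eqs(2) pos(4) by simp
  with \<open>x = 0\<close> \<open>y = 0\<close> show ?thesis by simp
qed

lemma rhoE_diff_kernel:
  assumes I: "0 \<le> Iij" "0 \<le> Ijk" "0 \<le> Iki" and "r \<in> pos_octant"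
    and "rhoE_diff Iij Ijk Iki r h = 0"
  shows "h = 0"
proof -
  have r: "0 < r$1" "0 < r$2" "0 < r$3"
    using \<open>r \<in> pos_octant\<close> by (auto simp: pos_octant_def)
  then have lengths: "0 < edge_len Iij (r$1) (r$2)" "0 < edge_len Ijk (r$2) (r$3)"
    "0 < edge_len Iki (r$3) (r$1)"
    using I by (simp_all add: edge_len_pos)
  have "rhoE_diff Iij Ijk Iki r h $ i = 0" for i
    using assms(5) by simp
  from this[of 1] this[of 2] this[of 3] have eqs:
    "(r$1 + Iij*r$2) * h$1 + (r$2 + Iij*r$1) * h$2 = 0"
    "(r$2 + Ijk*r$3) * h$2 + (r$3 + Ijk*r$2) * h$3 = 0"
    "(r$3 + Iki*r$1) * h$3 + (r$1 + Iki*r$3) * h$1 = 0"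
    using lengths by (simp_all add: rhoE_diff_def)
  have coeffs: "0 < r$1 + Iij*r$2" "0 < r$2 + Iij*r$1" "0 < r$2 + Ijk*r$3"
    "0 < r$3 + Ijk*r$2" "0 < r$3 + Iki*r$1" "0 < r$1 + Iki*r$3"
    using I r by (auto intro!: add_pos_nonneg)
  have "h$1 = 0 \<and> h$2 = 0 \<and> h$3 = 0"
    by (rule cyclic_system_trivial[OF coeffs eqs])
  then show ?thesis
    by (simp add: vec_eq_iff forall_3)
qed

lemma rhoE_immersion:
  assumes "0 \<le> Iij" and "0 \<le> Ijk" and "0 \<le> Iki" and "r \<in> pos_octant"
  shows "\<exists>D. (rhoE Iij Ijk Iki has_derivative D) (at r) \<and> inj D"
proof -
  have deriv: "(rhoE Iij Ijk Iki has_derivative rhoE_diff Iij Ijk Iki r) (at r)"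
    using assms by (rule rhoE_has_derivative)
  then have "linear (rhoE_diff Iij Ijk Iki r)"
    by (simp add: has_derivative_bounded_linear bounded_linear.linear)
  then have "inj (rhoE_diff Iij Ijk Iki r)"
    using rhoE_diff_kernel[OF assms] by (simp add: linear_inj_iff_eq_0)
  with deriv show ?thesis by blast
qed


subsection \<open>Injectivity and homeomorphism onto the image\<close>

lemma edge_len_strict_mono:
  assumes "0 \<le> I" "0 < a" "0 < b" "a \<le> a'" "b \<le> b'" "a < a' \<or> b < b'"
  shows "edge_len I a b < edge_len I a' b'"
proof -
  have "a\<^sup>2 \<le> a'\<^sup>2" "b\<^sup>2 \<le> b'\<^sup>2"
    using assms by (auto intro!: power_mono)
  moreover have "a\<^sup>2 < a'\<^sup>2 \<or> b\<^sup>2 < b'\<^sup>2"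
    using assms by (auto intro!: power_strict_mono)
  moreover have "2 * I * a * b \<le> 2 * I * a' * b'"
    using assms by (intro mult_mono) (auto intro!: mult_mono)
  ultimately show ?thesis
    unfolding edge_len_def by (intro real_sqrt_less_mono) linarith
qed

lemma edge_len_eq_trade_off:
  assumes "0 \<le> I" "0 < a" "0 < b" "0 < a'" "0 < b'"
    and "edge_len I a b = edge_len I a' b'" and "a < a'"
  shows "b' < b"
  using edge_len_strict_mono[of I a b a' b'] assms by force

lemma edge_len_eq_same_first:
  assumes "0 \<le> I" "0 < a" "0 < b" "0 < b'" and "edge_len I a b = edge_len I a b'"
  shows "b = b'"
  using edge_len_strict_mono[of I a b a b'] edge_len_strict_mono[of I a b' a b] assms
  by (cases b b' rule: linorder_cases) auto

lemma inj_on_rhoE: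
  assumes I: "0 \<le> Iij" "0 \<le> Ijk" "0 \<le> Iki"
  shows "inj_on (rhoE Iij Ijk Iki) pos_octant"
proof (rule inj_onI)
  fix r s
  assume "r \<in> pos_octant" "s \<in> pos_octant" and eq: "rhoE Iij Ijk Iki r = rhoE Iij Ijk Iki s"
  then have pos: "0 < r$1" "0 < r$2" "0 < r$3" "0 < s$1" "0 < s$2" "0 < s$3"
    by (auto simp: pos_octant_def)
  from eq have edges: "edge_len Iij (r$1) (r$2) = edge_len Iij (s$1) (s$2)"
    "edge_len Ijk (r$2) (r$3) = edge_len Ijk (s$2) (s$3)"
    "edge_len Iki (r$3) (r$1) = edge_len Iki (s$3) (s$1)"
    by (auto simp: rhoE_def vec_eq_iff forall_3)
  \<comment> \<open>going once around the triangle reverses a strict inequality between first radii\<close>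
  have around: "\<not> u$1 < v$1"
    if uv: "u = r \<and> v = s \<or> u = s \<and> v = r" for u v
  proof
    have pos_uv: "0 < u$1" "0 < u$2" "0 < u$3" "0 < v$1" "0 < v$2" "0 < v$3"
      and edges_uv: "edge_len Iij (u$1) (u$2) = edge_len Iij (v$1) (v$2)"
        "edge_len Ijk (u$2) (u$3) = edge_len Ijk (v$2) (v$3)"
        "edge_len Iki (u$3) (u$1) = edge_len Iki (v$3) (v$1)"
      using uv pos edges by auto
    assume "u$1 < v$1"
    then have "v$2 < u$2"
      using edge_len_eq_trade_off[OF I(1)] pos_uv edges_uv(1) by blast
    then have "u$3 < v$3"
      using edge_len_eq_trade_off[OF I(2)] pos_uv edges_uv(2) by metis
    then have "v$1 < u$1"
      using edge_len_eq_trade_off[OF I(3)] pos_uv edges_uv(3) by blast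
    with \<open>u$1 < v$1\<close> show False by simp
  qed
  then have "\<not> r$1 < s$1" and "\<not> s$1 < r$1"
    by blast+
  then have "r$1 = s$1"
    by linarith
  then have "r$2 = s$2"
    using edge_len_eq_same_first[OF I(1)] pos edges(1) by simp
  then have "r$3 = s$3"
    using edge_len_eq_same_first[OF I(2)] pos edges(2) by simp
  with \<open>r$1 = s$1\<close> \<open>r$2 = s$2\<close> show "r = s"
    by (simp add: vec_eq_iff forall_3)
qed

lemma open_pos_octant: "open pos_octant"
proof -
  have "pos_octant = {r. 0 < r$1} \<inter> {r. 0 < r$2} \<inter> {r::real^3. 0 < r$3}"
    by (auto simp: pos_octant_def forall_3)
  then show ?thesis
    by (metis open_Int open_halfspace_component_gt_cart)
qed

theorem mainTheorem2:
  fixes Iij Ijk Iki :: real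
  assumes "0 \<le> Iij" and "0 \<le> Ijk" and "0 \<le> Iki"
  shows "rhoE Iij Ijk Iki ` pos_octant \<subseteq> pos_octant
    \<and> smooth_embedding pos_octant (rhoE Iij Ijk Iki)
    \<and> (\<forall>l\<in>pos_octant. \<forall>r\<in>pos_octant. \<forall>s\<in>pos_octant.
          rhoE Iij Ijk Iki r = l \<longrightarrow> rhoE Iij Ijk Iki s = l \<longrightarrow> r = s)"
proof (intro conjI)
  show "rhoE Iij Ijk Iki ` pos_octant \<subseteq> pos_octant"
    using assms by (auto simp: pos_octant_def rhoE_def forall_3 intro!: edge_len_pos)
  have smooth: "smooth_on pos_octant (rhoE Iij Ijk Iki)"
    using assms by (rule smooth_on_rhoE)
  have inj: "inj_on (rhoE Iij Ijk Iki) pos_octant"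
    using assms by (rule inj_on_rhoE)
  have cont: "continuous_on pos_octant (rhoE Iij Ijk Iki)"
    using smooth unfolding smooth_on_def by (metis Ck_on.simps(1))
  obtain g where "homeomorphism pos_octant (rhoE Iij Ijk Iki ` pos_octant) (rhoE Iij Ijk Iki) g"
    using invariance_of_domain_homeomorphism[OF open_pos_octant cont _ inj] by auto
  with smooth show "smooth_embedding pos_octant (rhoE Iij Ijk Iki)"
    unfolding smooth_embedding_def using rhoE_immersion[OF assms] by blast
  show "\<forall>l\<in>pos_octant. \<forall>r\<in>pos_octant. \<forall>s\<in>pos_octant.
          rhoE Iij Ijk Iki r = l \<longrightarrow> rhoE Iij Ijk Iki s = l \<longrightarrow> r = s"
    using inj unfolding inj_on_def by metis
qed

end
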